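(* Let $P$ be a positive event pattern. Let $I_1, I_2$ be any two event streams, let $tr_1$ be an event trend matched by $P$ in $I_1$ and let $tr_2$ be an event trend matched by $P$ in $I_2$. Then the type of the first event of $tr_1$ equals the type of the first event of $tr_2$, and the type of the last event of $tr_1$ equals the type of the last event of $tr_2$.
   Context: Events: each event $e$ has an event type $e.type$ (from a fixed set of event types) and an occurrence time $e.time \in \mathbb{Q}_{\ge 0}$. An event stream $I$ is a finite collection of distinct events arriving in nondecreasing order of time. Positive patterns are defined recursively: an event type $E$ is a pattern; if $P_i, P_j$ are patterns then $P_i+$ (Kleene plus) and $\mathsf{SEQ}(P_i,P_j)$ (event sequence) are patterns. (Standing assumption: each event type occurs at most once in a pattern.) The set $matches(P)$ of finite sequences of events of $I$ matched by $P$ is defined recursively: (i) $matches(E)$ consists of the one-element sequences $(e)$ with $e \in I$, $e.type = E$; (ii) $s=(e_1,\dots,e_k) \in matches(\mathsf{SEQ}(P_i,P_j))$ iff there is $m$ with $1 \le m \le k$ such that $(e_1,\dots,e_m) \in matches(P_i)$, $(e_{m+1},\dots,e_k) \in matches(P_j)$, and $e_l.time < e_{l+1}.time$ for all $1 \le l < k$; (iii) $tr \in matches(P_i+)$ iff $tr$ is the concatenation $s_1 s_2 \cdots s_k$ of sequences $s_1,\dots,s_k$ ($k \ge 1$), each $s_l \in matches(P_i)$, such that the time of the last event of $s_l$ is strictly less than the time of the first event of $s_{l+1}$. An event trend matched by $P$ in $I$ is an element of $matches(P)$ computed over $I$. *)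

theory Defs
  imports Main "HOL.Rat"
begin

text \<open>Events: an identifier (so that distinct events may share type and time),
  an event type, and an occurrence time.\<close>
datatype 'ty event = Ev (evid: nat) (etype: 'ty) (etime: rat)

definition event_stream :: "'ty event list \<Rightarrow> bool" where
  "event_stream I \<longleftrightarrow> distinct I \<and> (\<forall>e\<in>set I. 0 \<le> etime e)
     \<and> sorted_wrt (\<lambda>e f. etime e \<le> etime f) I"

datatype 'ty pattern = Atom 'ty | KPlus "'ty pattern" | SEQ "'ty pattern" "'ty pattern"

fun pat_types :: "'ty pattern \<Rightarrow> 'ty list" where
  "pat_types (Atom E) = [E]"
| "pat_types (KPlus P) = pat_types P"
| "pat_types (SEQ P Q) = pat_types P @ pat_types Q"

definition well_formed_pattern :: "'ty pattern \<Rightarrow> bool" where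
  "well_formed_pattern P \<longleftrightarrow> distinct (pat_types P)"

inductive_set kplus :: "'ty event list set \<Rightarrow> 'ty event list set" for S where
  single: "s \<in> S \<Longrightarrow> s \<in> kplus S"
| cons: "\<lbrakk>s \<in> S; t \<in> kplus S; etime (last s) < etime (hd t)\<rbrakk> \<Longrightarrow> s @ t \<in> kplus S"

fun matches :: "'ty event list \<Rightarrow> 'ty pattern \<Rightarrow> 'ty event list set" where
  "matches I (Atom E) = {[e] | e. e \<in> set I \<and> etype e = E}"
| "matches I (SEQ P Q) = {s. \<exists>m. 1 \<le> m \<and> m \<le> length s
      \<and> take m s \<in> matches I P \<and> drop m s \<in> matches I Q
      \<and> (\<forall>l. l + 1 < length s \<longrightarrow> etime (s ! l) < etime (s ! (l + 1)))}"
| "matches I (KPlus P) = kplus (matches I P)"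

end

theory Submission
  imports Defs
begin

text \<open>By induction on the pattern, every trend matched by \<open>P\<close> is nonempty, begins with an
  event of the first type of \<open>pat_types P\<close> and ends with an event of its last type: an atom
  matches a single event of its type, a sequence inherits its first event from the left
  operand and its last event from the right one, and a Kleene-plus concatenation inherits
  both from its first and last blocks. These types depend on \<open>P\<close> alone, not on the stream.\<close>

lemma pat_types_not_Nil: "pat_types P \<noteq> []"
  by (induction P) auto

lemma kplus_endpoints:
  assumes "t \<in> kplus S"
    and "\<And>s. s \<in> S \<Longrightarrow> s \<noteq> [] \<and> hd s \<in> A \<and> last s \<in> B"
  shows "t \<noteq> [] \<and> hd t \<in> A \<and> last t \<in> B"
  using assms(1)
proof (induction t rule: kplus.induct)
  case (single s)
  then show ?case using assms(2) by blast
next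
  case (cons s t)
  then show ?case using assms(2)[of s] by simp
qed

lemma matches_endpoint_types:
  assumes "s \<in> matches I P"
  shows "s \<noteq> [] \<and> etype (hd s) = hd (pat_types P) \<and> etype (last s) = last (pat_types P)"
  using assms
proof (induction P arbitrary: s)
  case (Atom E)
  then show ?case by auto
next
  case (KPlus P)
  have "s \<in> kplus (matches I P)"
    using KPlus.prems by simp
  from kplus_endpoints[OF this, of "{e. etype e = hd (pat_types P)}"
      "{e. etype e = last (pat_types P)}"]
  show ?case using KPlus.IH by simp
next
  case (SEQ P Q)
  from SEQ.prems obtain m where m: "1 \<le> m" "m \<le> length s"
    and left: "take m s \<in> matches I P" and right: "drop m s \<in> matches I Q"
    by auto
  have "drop m s \<noteq> []"
    using SEQ.IH(2)[OF right] by blast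
  then have "m < length s"
    by simp
  then have "hd (take m s) = hd s" and "last (drop m s) = last s"
    using m(1) by simp_all
  then show ?case
    using SEQ.IH(1)[OF left] SEQ.IH(2)[OF right] \<open>m < length s\<close>
      pat_types_not_Nil[of P] pat_types_not_Nil[of Q]
    by auto
qed

theorem theorem1:
  fixes P :: "'ty pattern" and I1 I2 tr1 tr2 :: "'ty event list"
  assumes "well_formed_pattern P"
    and "event_stream I1" and "event_stream I2"
    and "tr1 \<in> matches I1 P" and "tr2 \<in> matches I2 P"
  shows "etype (hd tr1) = etype (hd tr2) \<and> etype (last tr1) = etype (last tr2)"
  using matches_endpoint_types[OF assms(4)] matches_endpoint_types[OF assms(5)] by simp

end
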